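(* Let $U$ be a finite set of black vertices of $\frac1n\Lambda$, let $\bar U=U\cup\{u-\frac1ne_i+\frac1ne_j:u\in U,\ 1\le i,j\le D\}$ and $\partial U=\bar U\setminus U$. Let $q,q_+,q_-:\bar U\to(0,\infty)$ satisfy, for all $u\in U$, $\mathcal C_n(q)(u)=1$, $\mathcal C_n(q_+)(u)>1$ and $\mathcal C_n(q_-)(u)<1$, where $$\mathcal C_n(q)(u)=q(u)\sum_{i=1}^D\Big(\sum_{j=1}^Dq\big(u-\tfrac1ne_i+\tfrac1ne_j\big)\Big)^{-1}.$$ Then $\min_{\bar U}q/q_-=\min_{\partial U}q/q_-$ and $\max_{\bar U}q/q_+=\max_{\partial U}q/q_+$.
   Context: $\Lambda$ is a bipartite lattice in $\mathbb R^d$: vectors $e_1,\dots,e_D$ spanning $\mathbb R^d$ with $\sum e_i=0$ and $e_i\in v_0+\mathbb Z^d$; white vertices $\mathbb Z^d$, black vertices $\mathbb Z^d+v_0$, each white vertex $w$ joined to $w+e_1,\dots,w+e_D$ (so each black vertex $u$ is joined to $u-e_1,\dots,u-e_D$). *)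

theory Defs
  imports "HOL-Analysis.Analysis"
begin

definition int_lattice :: "(real^'d) set" where
  "int_lattice = {z. \<forall>k. z $ k \<in> \<int>}"

definition bipartite_lattice :: "nat \<Rightarrow> (nat \<Rightarrow> real^'d) \<Rightarrow> real^'d \<Rightarrow> bool" where
  "bipartite_lattice D e v0 \<longleftrightarrow>
     span (e ` {1..D}) = UNIV \<and> (\<Sum>i=1..D. e i) = 0 \<and>
     (\<forall>i\<in>{1..D}. e i - v0 \<in> int_lattice)"

definition black_vertices :: "nat \<Rightarrow> real^'d \<Rightarrow> (real^'d) set" where
  "black_vertices n v0 = {(1 / real n) *\<^sub>R (z + v0) | z. z \<in> int_lattice}"

definition closure_U :: "nat \<Rightarrow> nat \<Rightarrow> (nat \<Rightarrow> real^'d) \<Rightarrow> (real^'d) set \<Rightarrow> (real^'d) set" where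
  "closure_U D n e U = U \<union> {u - (1 / real n) *\<^sub>R e i + (1 / real n) *\<^sub>R e j | u i j.
       u \<in> U \<and> i \<in> {1..D} \<and> j \<in> {1..D}}"

definition boundary_U :: "nat \<Rightarrow> nat \<Rightarrow> (nat \<Rightarrow> real^'d) \<Rightarrow> (real^'d) set \<Rightarrow> (real^'d) set" where
  "boundary_U D n e U = closure_U D n e U - U"

definition Cn :: "nat \<Rightarrow> nat \<Rightarrow> (nat \<Rightarrow> real^'d) \<Rightarrow> (real^'d \<Rightarrow> real) \<Rightarrow> real^'d \<Rightarrow> real" where
  "Cn D n e q u = q u * (\<Sum>i=1..D. inverse (\<Sum>j=1..D.
       q (u - (1 / real n) *\<^sub>R e i + (1 / real n) *\<^sub>R e j)))"

end

theory Submission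
  imports Defs
begin

text \<open>Discrete maximum principle. \<open>Cn\<close> is invariant under scaling of \<open>q\<close> and, for fixed
  \<open>q u\<close>, decreasing in the values of \<open>q\<close> at the neighbours of \<open>u\<close>. If \<open>q / qm\<close> attained its
  minimum \<open>c\<close> over the closure at some \<open>u \<in> U\<close>, then \<open>c * qm \<le> q\<close> with equality at \<open>u\<close>,
  whence \<open>Cn q u \<le> Cn (c * qm) u = Cn qm u\<close>, contradicting \<open>Cn qm u < 1 = Cn q u\<close>. The
  maximum of \<open>q / qp\<close> is symmetric.\<close>

lemma neighbour_in_closure_U:
  "u \<in> U \<Longrightarrow> i \<in> {1..D} \<Longrightarrow> j \<in> {1..D} \<Longrightarrow>
   u - (1 / real n) *\<^sub>R e i + (1 / real n) *\<^sub>R e j \<in> closure_U D n e U"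
  unfolding closure_U_def by blast

lemma subset_closure_U: "U \<subseteq> closure_U D n e U"
  unfolding closure_U_def by blast

lemma finite_closure_U:
  assumes "finite U"
  shows "finite (closure_U D n e U)"
proof -
  have "closure_U D n e U = U \<union>
      (\<Union>u\<in>U. \<Union>i\<in>{1..D}. \<Union>j\<in>{1..D}. {u - (1 / real n) *\<^sub>R e i + (1 / real n) *\<^sub>R e j})"
    unfolding closure_U_def by blast
  then show ?thesis
    using assms by simp
qed

lemma Cn_scale:
  assumes "c \<noteq> 0"
  shows "Cn D n e (\<lambda>x. c * f x) u = Cn D n e f u"
proof -
  have "inverse (\<Sum>j=1..D. c * f (w j)) = inverse c * inverse (\<Sum>j=1..D. f (w j))" for w
    by (simp add: sum_distrib_left[symmetric])
  then show ?thesis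
    using assms by (simp add: Cn_def sum_distrib_left[symmetric])
qed

lemma Cn_antimono_neighbours:
  fixes f g :: "real^'d \<Rightarrow> real"
  assumes u: "u \<in> U"
    and le: "\<forall>v\<in>closure_U D n e U. 0 < f v \<and> f v \<le> g v"
    and eq: "g u = f u"
  shows "Cn D n e g u \<le> Cn D n e f u"
proof -
  let ?w = "\<lambda>i j. u - (1 / real n) *\<^sub>R e i + (1 / real n) *\<^sub>R e j"
  have "inverse (\<Sum>j=1..D. g (?w i j)) \<le> inverse (\<Sum>j=1..D. f (?w i j))"
    if i: "i \<in> {1..D}" for i
  proof (rule le_imp_inverse_le)
    show "(\<Sum>j=1..D. f (?w i j)) \<le> (\<Sum>j=1..D. g (?w i j))"
      using le neighbour_in_closure_U[OF u i] by (intro sum_mono) simp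
    show "0 < (\<Sum>j=1..D. f (?w i j))"
      using i le neighbour_in_closure_U[OF u i] by (intro sum_pos) auto
  qed
  then have "(\<Sum>i=1..D. inverse (\<Sum>j=1..D. g (?w i j)))
      \<le> (\<Sum>i=1..D. inverse (\<Sum>j=1..D. f (?w i j)))"
    by (rule sum_mono)
  moreover have "0 \<le> f u"
    using le u subset_closure_U by (metis less_imp_le subsetD)
  ultimately show ?thesis
    unfolding Cn_def eq by (rule mult_left_mono)
qed

lemma Cn_le_if_touching_from_below:
  fixes f g :: "real^'d \<Rightarrow> real"
  assumes u: "u \<in> U" and c: "0 < c"
    and pos: "\<forall>v\<in>closure_U D n e U. 0 < g v"
    and below: "\<forall>v\<in>closure_U D n e U. c * g v \<le> f v"
    and touch: "f u = c * g u"
  shows "Cn D n e f u \<le> Cn D n e g u"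
proof -
  have "Cn D n e f u \<le> Cn D n e (\<lambda>x. c * g x) u"
    using u c pos below touch by (intro Cn_antimono_neighbours) auto
  then show ?thesis
    using c by (simp add: Cn_scale)
qed

lemma Min_image_eq_Min_image_Diff:
  fixes r :: "'a \<Rightarrow> 'b::linorder"
  assumes "finite A" and not_min: "\<And>x. x \<in> A \<Longrightarrow> x \<in> U \<Longrightarrow> r x \<noteq> Min (r ` A)"
  shows "Min (r ` A) = Min (r ` (A - U))"
proof (cases "A = {}")
  case False
  with \<open>finite A\<close> have "Min (r ` A) \<in> r ` A"
    by simp
  then obtain x where x: "x \<in> A" "r x = Min (r ` A)"
    by (metis imageE)
  with not_min have "x \<in> A - U"
    by blast
  then have "Min (r ` (A - U)) \<le> Min (r ` A)"
    using x \<open>finite A\<close> by (metis Min_le finite_Diff finite_imageI image_eqI)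
  moreover have "Min (r ` A) \<le> Min (r ` (A - U))"
    using \<open>x \<in> A - U\<close> \<open>finite A\<close> by (intro Min_antimono) auto
  ultimately show ?thesis
    by simp
qed simp

lemma Max_image_eq_Max_image_Diff:
  fixes r :: "'a \<Rightarrow> 'b::linorder"
  assumes "finite A" and not_max: "\<And>x. x \<in> A \<Longrightarrow> x \<in> U \<Longrightarrow> r x \<noteq> Max (r ` A)"
  shows "Max (r ` A) = Max (r ` (A - U))"
proof (cases "A = {}")
  case False
  with \<open>finite A\<close> have "Max (r ` A) \<in> r ` A"
    by simp
  then obtain x where x: "x \<in> A" "r x = Max (r ` A)"
    by (metis imageE)
  with not_max have "x \<in> A - U"
    by blast
  then have "Max (r ` A) \<le> Max (r ` (A - U))"
    using x \<open>finite A\<close> by (metis Max_ge finite_Diff finite_imageI image_eqI)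
  moreover have "Max (r ` (A - U)) \<le> Max (r ` A)"
    using \<open>x \<in> A - U\<close> \<open>finite A\<close> by (intro Max_mono) auto
  ultimately show ?thesis
    by simp
qed simp

lemma Min_ratio_on_boundary_U:
  fixes f g :: "real^'d \<Rightarrow> real"
  assumes "finite U"
    and pos: "\<forall>v\<in>closure_U D n e U. 0 < f v \<and> 0 < g v"
    and Cn_less: "\<forall>u\<in>U. Cn D n e g u < Cn D n e f u"
  shows "Min ((\<lambda>x. f x / g x) ` closure_U D n e U) = Min ((\<lambda>x. f x / g x) ` boundary_U D n e U)"
  unfolding boundary_U_def
proof (rule Min_image_eq_Min_image_Diff)
  let ?C = "closure_U D n e U"
  show fin: "finite ?C"
    using \<open>finite U\<close> by (rule finite_closure_U)
  fix x assume x: "x \<in> ?C" "x \<in> U"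
  show "f x / g x \<noteq> Min ((\<lambda>x. f x / g x) ` ?C)"
  proof
    assume min: "f x / g x = Min ((\<lambda>x. f x / g x) ` ?C)"
    have "\<forall>v\<in>?C. f x / g x * g v \<le> f v"
    proof
      fix v assume v: "v \<in> ?C"
      then have "f x / g x \<le> f v / g v"
        unfolding min using fin by simp
      then show "f x / g x * g v \<le> f v"
        using pos v by (simp add: le_divide_eq)
    qed
    moreover have "f x = f x / g x * g x" and "0 < f x / g x"
      using pos x(1) by auto
    ultimately have "Cn D n e f x \<le> Cn D n e g x"
      using pos x(2) by (intro Cn_le_if_touching_from_below) auto
    with Cn_less x(2) show False
      by fastforce
  qed
qed

lemma Max_ratio_on_boundary_U:
  fixes f g :: "real^'d \<Rightarrow> real"
  assumes "finite U"
    and pos: "\<forall>v\<in>closure_U D n e U. 0 < f v \<and> 0 < g v"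
    and Cn_less: "\<forall>u\<in>U. Cn D n e f u < Cn D n e g u"
  shows "Max ((\<lambda>x. f x / g x) ` closure_U D n e U) = Max ((\<lambda>x. f x / g x) ` boundary_U D n e U)"
  unfolding boundary_U_def
proof (rule Max_image_eq_Max_image_Diff)
  let ?C = "closure_U D n e U"
  show fin: "finite ?C"
    using \<open>finite U\<close> by (rule finite_closure_U)
  fix x assume x: "x \<in> ?C" "x \<in> U"
  show "f x / g x \<noteq> Max ((\<lambda>x. f x / g x) ` ?C)"
  proof
    assume max: "f x / g x = Max ((\<lambda>x. f x / g x) ` ?C)"
    have "\<forall>v\<in>?C. g x / f x * f v \<le> g v"
    proof
      fix v assume v: "v \<in> ?C"
      then have "f v / g v \<le> f x / g x"
        unfolding max using fin by simp
      moreover have "0 < f v" "0 < g v" "0 < f x" "0 < g x"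
        using pos v x(1) by auto
      ultimately show "g x / f x * f v \<le> g v"
        by (simp add: field_simps)
    qed
    moreover have "g x = g x / f x * f x" and "0 < g x / f x"
      using pos x(1) by auto
    ultimately have "Cn D n e g x \<le> Cn D n e f x"
      using pos x(2) by (intro Cn_le_if_touching_from_below) auto
    with Cn_less x(2) show False
      by fastforce
  qed
qed

theorem mainTheorem17:
  fixes D n :: nat and e :: "nat \<Rightarrow> real^'d" and v0 :: "real^'d"
    and U :: "(real^'d) set" and q qp qm :: "real^'d \<Rightarrow> real"
  assumes "bipartite_lattice D e v0"
    and "n \<ge> 1"
    and "finite U" and "U \<subseteq> black_vertices n v0"
    and "\<forall>x\<in>closure_U D n e U. q x > 0 \<and> qp x > 0 \<and> qm x > 0"
    and "\<forall>u\<in>U. Cn D n e q u = 1 \<and> Cn D n e qp u > 1 \<and> Cn D n e qm u < 1"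
  shows "Min ((\<lambda>x. q x / qm x) ` closure_U D n e U) = Min ((\<lambda>x. q x / qm x) ` boundary_U D n e U)
     \<and> Max ((\<lambda>x. q x / qp x) ` closure_U D n e U) = Max ((\<lambda>x. q x / qp x) ` boundary_U D n e U)"
  using Min_ratio_on_boundary_U[of U D n e q qm] Max_ratio_on_boundary_U[of U D n e q qp] assms(3,5,6)
  by auto

end
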